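(* Let $G$ be the path graph on $n$ vertices $v_1,\dots,v_n$ ($v_t$ adjacent to $v_{t+1}$ for $1\le t<n$; the linear nearest-neighbor architecture). The QFT circuit on $n$ qubits produced by the construction in the context has CNOT cost $1.5n^2-1.5n-1$.
   Context: A walk is a sequence $(u_1,\dots,u_h)$ of vertices with consecutive entries adjacent (repetitions allowed), of length $h$. Each vertex carries one physical qubit; two-qubit gates only act on qubits at adjacent vertices. Gates: Hadamard $H$; controlled phase $CR_d=\mathrm{diag}(1,1,1,e^{i\pi/2^{d-1}})$; SWAP. Construction: let $P$ be a shortest walk in $G$ visiting all vertices. Place logical qubit $r$ ($1\le r\le n$) on the $r$-th distinct vertex of $P$ in order of first occurrence; whenever a SWAP is applied the logical qubits on its two vertices exchange places. Let $R=V$. For $r=1,\dots,n$: let $P'=(u_1,\dots,u_{k'})$ be $P$ if $r=1$, and otherwise a shortest walk in the induced subgraph $G[R]$ that starts at the vertex currently holding logical qubit $r$ and visits every vertex of $R$. Cascade $r$: apply $H$ to $u_1$; $j=1$, $U=\emptyset$; while $j\le k'-1$: (i) if $u_{j+1}\notin U$, apply $CR_d$ with control $u_{j+1}$, target $u_j$, where $d$ is (index of the logical qubit on $u_{j+1}$) $-\,r$, and add $u_{j+1}$ to $U$; (ii) if $j\le k'-2$ and $u_{j+2}=u_j$, set $j\leftarrow j+2$; otherwise, if $k'\ne 2$ apply SWAP to $u_j,u_{j+1}$, and set $j\leftarrow j+1$. After cascade $r$, remove from $R$ the vertex holding logical qubit $r$. CNOT cost: number of CNOTs after decomposition, counting $H$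 as 0, each $CR_d$ as 2, each SWAP as 3, and a $CR_d$ immediately followed by a SWAP on the same two qubits as 3 in total. *)

theory Defs
  imports Complex_Main
begin

text \<open>Physical qubits are identified with vertices (natural numbers).\<close>
datatype gate =
    Had nat
  | CR nat nat int          (* CR nat nat d: control vertex, target vertex, index d *)
  | SWAP nat nat

fun cnot_cost :: "gate list \<Rightarrow> nat" where
  "cnot_cost [] = 0"
| "cnot_cost (Had _ # gs) = cnot_cost gs"
| "cnot_cost (CR c t d # SWAP a b # gs) =
     (if {a, b} = {c, t} then 3 + cnot_cost gs else 2 + cnot_cost (SWAP a b # gs))"
| "cnot_cost (CR c t d # gs) = 2 + cnot_cost gs"
| "cnot_cost (SWAP a b # gs) = 3 + cnot_cost gs"

definition is_walk :: "(nat \<Rightarrow> nat \<Rightarrow> bool) \<Rightarrow> nat set \<Rightarrow> nat list \<Rightarrow> bool" where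
  "is_walk E R ws \<longleftrightarrow> ws \<noteq> [] \<and> set ws \<subseteq> R \<and>
     (\<forall>i. Suc i < length ws \<longrightarrow> E (ws ! i) (ws ! Suc i))"

definition shortest_cover_walk :: "(nat \<Rightarrow> nat \<Rightarrow> bool) \<Rightarrow> nat set \<Rightarrow> nat list \<Rightarrow> bool" where
  "shortest_cover_walk E R ws \<longleftrightarrow> is_walk E R ws \<and> set ws = R \<and>
     (\<forall>ws'. is_walk E R ws' \<and> set ws' = R \<longrightarrow> length ws \<le> length ws')"

definition shortest_cover_walk_from ::
  "(nat \<Rightarrow> nat \<Rightarrow> bool) \<Rightarrow> nat set \<Rightarrow> nat \<Rightarrow> nat list \<Rightarrow> bool" where
  "shortest_cover_walk_from E R s ws \<longleftrightarrow> is_walk E R ws \<and> set ws = R \<and> hd ws = s \<and>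
     (\<forall>ws'. is_walk E R ws' \<and> set ws' = R \<and> hd ws' = s \<longrightarrow> length ws \<le> length ws')"

text \<open>A placement maps each vertex to the index of the logical qubit it currently holds.\<close>
type_synonym placement = "nat \<Rightarrow> nat"

definition swap_pl :: "placement \<Rightarrow> nat \<Rightarrow> nat \<Rightarrow> placement" where
  "swap_pl pl a b = pl(a := pl b, b := pl a)"

text \<open>The argument list is the remaining walk
  (u_j, u_{j+1}, ..., u_{k'}); k2 says whether k' = 2; U is the set of used vertices.\<close>
fun cascade_loop :: "nat \<Rightarrow> bool \<Rightarrow> nat set \<Rightarrow> placement \<Rightarrow> nat list \<Rightarrow> gate list \<times> placement" where
  "cascade_loop r k2 U pl (a # b # rest) =
     (let g1 = (if b \<notin> U then [CR b a (int (pl b) - int r)] else []);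
          U' = insert b U
      in if rest \<noteq> [] \<and> hd rest = a
         then (let (g, pl') = cascade_loop r k2 U' pl rest in (g1 @ g, pl'))
         else if \<not> k2
         then (let (g, pl') = cascade_loop r k2 U' (swap_pl pl a b) (b # rest)
               in (g1 @ [SWAP a b] @ g, pl'))
         else (let (g, pl') = cascade_loop r k2 U' pl (b # rest) in (g1 @ g, pl')))"
| "cascade_loop r k2 U pl ws = ([], pl)"

definition cascade :: "nat \<Rightarrow> nat list \<Rightarrow> placement \<Rightarrow> gate list \<times> placement" where
  "cascade r ws pl =
     (let (g, pl') = cascade_loop r (length ws = 2) {} pl ws in (Had (hd ws) # g, pl'))"

text \<open>Initial placement: logical qubit r sits on the r-th distinct vertex of P
  (in order of first occurrence).\<close>
definition init_pl :: "nat list \<Rightarrow> placement" where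
  "init_pl P v = Suc (LEAST i. i < length (remdups P) \<and> remdups P ! i = v)"

definition holder :: "nat set \<Rightarrow> placement \<Rightarrow> nat \<Rightarrow> nat" where
  "holder V pl r = (THE v. v \<in> V \<and> pl v = r)"

text \<open>State after the first m cascades, given the walks W r used for cascade r:
  (emitted gates, placement, remaining vertex set R).\<close>
fun qft_state :: "nat set \<Rightarrow> nat list \<Rightarrow> (nat \<Rightarrow> nat list) \<Rightarrow> nat \<Rightarrow>
                  gate list \<times> placement \<times> nat set" where
  "qft_state V P W 0 = ([], init_pl P, V)"
| "qft_state V P W (Suc m) =
     (let (g, pl, R) = qft_state V P W m;
          (g', pl') = cascade (Suc m) (W (Suc m)) pl
      in (g @ g', pl', R - {holder V pl' (Suc m)}))"

definition valid_choices ::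
  "(nat \<Rightarrow> nat \<Rightarrow> bool) \<Rightarrow> nat set \<Rightarrow> nat \<Rightarrow> nat list \<Rightarrow> (nat \<Rightarrow> nat list) \<Rightarrow> bool" where
  "valid_choices E V n P W \<longleftrightarrow> shortest_cover_walk E V P \<and> W 1 = P \<and>
     (\<forall>r. 2 \<le> r \<and> r \<le> n \<longrightarrow>
        (let (g, pl, R) = qft_state V P W (r - 1)
         in shortest_cover_walk_from E R (holder V pl r) (W r)))"

definition qft_circuit :: "nat set \<Rightarrow> nat \<Rightarrow> nat list \<Rightarrow> (nat \<Rightarrow> nat list) \<Rightarrow> gate list" where
  "qft_circuit V n P W = fst (qft_state V P W n)"

definition path_adj :: "nat \<Rightarrow> nat \<Rightarrow> bool" where
  "path_adj u v \<longleftrightarrow> v = Suc u \<or> u = Suc v"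

end

theory Submission imports Defs begin

(* On the line, every walk used by the construction is a simple path traversed from one end.
   After m cascades the remaining vertices form a path of n - m vertices that carries the
   logical qubits m+1, ..., n in order starting at one end, so the shortest walk covering
   them from the holder of qubit m+1 is forced to be this path. On a path of k >= 3
   vertices the cascade fuses every CR with the following SWAP, costing 3(k-1) CNOTs, and
   carries qubit m+1 to the far end, where it is retired; for k = 2 it is a single CR
   (2 CNOTs) and for k = 1 only a Hadamard. Summing,
   2 + 3(2 + ... + (n-1)) = 1.5n^2 - 1.5n - 1. *)

lemma distinct_if_length_le:
  assumes "distinct xs" "set ys = set xs" "length ys \<le> length xs"
  shows "distinct ys"
  by (metis assms card_distinct card_length distinct_card le_antisym)

lemma successively_butlast: "successively P xs \<Longrightarrow> successively P (butlast xs)"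
  by (metis append_butlast_last_id butlast.simps(1) successively_append_iff)

lemma successively_tl: "successively P xs \<Longrightarrow> successively P (tl xs)"
  by (cases xs) (auto simp: successively_Cons)

lemma path_adj_progression:
  assumes "successively path_adj L" "distinct L" "Suc 0 < length L"
  obtains d :: int where "\<bar>d\<bar> = 1" "\<And>j. j < length L \<Longrightarrow> int (L ! j) = int (L ! 0) + d * int j"
proof -
  define d where "d = int (L ! 1) - int (L ! 0)"
  have step: "\<bar>int (L ! Suc i) - int (L ! i)\<bar> = 1" if "Suc i < length L" for i
    using successively_nth[OF assms(1) that] unfolding path_adj_def by auto
  have d_abs: "\<bar>d\<bar> = 1" using step[of 0] assms(3) by (simp add: d_def)
  have "int (L ! j) = int (L ! 0) + d * int j" if "j < length L" for j
    using that
  proof (induction j rule: less_induct)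
    case (less j)
    consider "j = 0" | "j = 1" | k where "j = Suc (Suc k)"
      by (metis One_nat_def not0_implies_Suc)
    then show ?case
    proof cases
      case 3
      have "L ! j \<noteq> L ! k" using assms(2) less.prems 3 by (simp add: nth_eq_iff_index_eq)
      then show ?thesis
        using less.IH[of k] less.IH[of "Suc k"] step[of "Suc k"] d_abs less.prems 3
        by (auto simp: algebra_simps abs_if split: if_splits)
    qed (auto simp: d_def)
  qed
  with d_abs show ?thesis using that by blast
qed

lemma path_adj_walk_unique:
  assumes "successively path_adj A" "successively path_adj B" "distinct A" "distinct B"
    and "set A = set B" "hd A = hd B"
  shows "A = B"
proof -
  have len: "length A = length B" using assms(3-5) by (metis distinct_card)
  consider "length A \<le> 1" | "Suc 0 < length A" by linarith
  then show ?thesis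
  proof cases
    case 1
    then show ?thesis using len assms(6) by (cases A; cases B) auto
  next
    case 2
    obtain dA where dA: "\<bar>dA\<bar> = 1" "\<And>j. j < length A \<Longrightarrow> int (A ! j) = int (A ! 0) + dA * int j"
      using path_adj_progression[OF assms(1,3) 2] by metis
    obtain dB where dB: "\<bar>dB\<bar> = 1" "\<And>j. j < length B \<Longrightarrow> int (B ! j) = int (B ! 0) + dB * int j"
      using path_adj_progression[OF assms(2,4)] 2 len by metis
    have "A \<noteq> []" "B \<noteq> []" using 2 len by auto
    then have hd0: "A ! 0 = B ! 0" using assms(6) by (simp add: hd_conv_nth)
    obtain j where j: "j < length B" "B ! j = A ! 1"
      using nth_mem[of 1 A] assms(5) 2 by (metis in_set_conv_nth One_nat_def)
    then have "dB * int j = dA" using dA(2)[of 1] dB(2)[of j] hd0 2 by simp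
    then have "dA = dB" using dA(1) dB(1) by (auto simp: abs_mult abs_if split: if_splits)
    show ?thesis
    proof (rule nth_equalityI)
      fix i assume "i < length A"
      then have "int (A ! i) = int (B ! i)" using len dA(2) dB(2) hd0 \<open>dA = dB\<close> by simp
      then show "A ! i = B ! i" by simp
    qed (fact len)
  qed
qed

lemma successively_path_adj_upt: "successively path_adj [a..<b]"
  by (simp add: successively_conv_nth path_adj_def del: upt_Suc)

lemma is_walk_iff_successively:
  "is_walk E R ws \<longleftrightarrow> ws \<noteq> [] \<and> set ws \<subseteq> R \<and> successively E ws"
  unfolding is_walk_def successively_conv_nth by blast

lemma shortest_cover_walk_from_path_adj:
  assumes "successively path_adj L" "distinct L" "L \<noteq> []"
    and "shortest_cover_walk_from path_adj (set L) (hd L) W"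
  shows "W = L"
proof -
  have "is_walk path_adj (set L) L" using assms(1,3) by (simp add: is_walk_iff_successively)
  then have "length W \<le> length L" "set W = set L" "hd W = hd L" "successively path_adj W"
    using assms(4) unfolding shortest_cover_walk_from_def is_walk_iff_successively by auto
  then show ?thesis using path_adj_walk_unique distinct_if_length_le assms(1,2) by metis
qed

lemma shortest_cover_walk_path_adj:
  assumes "shortest_cover_walk path_adj {1..n} P"
  shows "successively path_adj P" "distinct P" "set P = {1..n}" "length P = n"
proof -
  show P: "successively path_adj P" "set P = {1..n}"
    using assms unfolding shortest_cover_walk_def is_walk_iff_successively by auto
  have "P \<noteq> []" using assms unfolding shortest_cover_walk_def is_walk_def by blast
  then have "1 \<le> n" using P(2) by (metis atLeastatMost_empty_iff2 le_less_linear set_empty2)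
  have cover: "set [1..<Suc n] = {1..n}" by (simp only: set_upt atLeastLessThanSuc_atLeastAtMost)
  have "is_walk path_adj {1..n} [1..<Suc n]"
    unfolding is_walk_iff_successively using \<open>1 \<le> n\<close> cover
    by (simp add: successively_path_adj_upt del: upt_Suc)
  then have "length P \<le> length [1..<Suc n]"
    using assms cover unfolding shortest_cover_walk_def by blast
  then show "distinct P" using distinct_if_length_le[OF distinct_upt] P(2) cover by metis
  then show "length P = n" using P(2) distinct_card by fastforce
qed

lemma cnot_cost_append_Had: "cnot_cost (xs @ Had h # ys) = cnot_cost xs + cnot_cost ys"
  by (induction xs rule: cnot_cost.induct) auto

lemma cascade_loop_distinct:
  "distinct ws \<Longrightarrow> U \<inter> set (tl ws) = {} \<Longrightarrow>
   cnot_cost (fst (cascade_loop r False U pl ws)) = 3 * (length ws - 1) \<and>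
   map (snd (cascade_loop r False U pl ws)) ws = rotate1 (map pl ws) \<and>
   (\<forall>v. v \<notin> set ws \<longrightarrow> snd (cascade_loop r False U pl ws) v = pl v)"
proof (induction ws arbitrary: U pl)
  case (Cons a ws)
  show ?case
  proof (cases ws)
    case (Cons b rest)
    obtain g pl' where loop: "cascade_loop r False (insert b U) (swap_pl pl a b) (b # rest) = (g, pl')"
      by fastforce
    have "b \<notin> U" "\<not> (rest \<noteq> [] \<and> hd rest = a)" using Cons.prems Cons by (auto simp: neq_Nil_conv)
    then have "cascade_loop r False U pl (a # b # rest) =
        (CR b a (int (pl b) - int r) # SWAP a b # g, pl')"
      using loop by (auto simp: Let_def)
    moreover have "cnot_cost g = 3 * length rest \<and>
        map pl' (b # rest) = rotate1 (map (swap_pl pl a b) (b # rest)) \<and>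
        (\<forall>v. v \<notin> set (b # rest) \<longrightarrow> pl' v = swap_pl pl a b v)"
      using Cons.IH[of "insert b U" "swap_pl pl a b"] Cons.prems Cons loop by auto
    moreover have "map (swap_pl pl a b) rest = map pl rest" using Cons.prems Cons by (auto simp: swap_pl_def)
    ultimately show ?thesis using Cons.prems Cons by (auto simp: swap_pl_def)
  qed simp
qed simp

definition cascade_cost :: "nat \<Rightarrow> nat" where
  "cascade_cost k = (if k = 2 then 2 else 3 * (k - 1))"

lemma cascade_distinct:
  assumes "distinct L" "L \<noteq> []"
  obtains g pl' x L' where "cascade r L pl = (Had (hd L) # g, pl')"
    "cnot_cost g = cascade_cost (length L)" "L' = butlast L \<or> L' = tl L"
    "set L = insert x (set L')" "x \<notin> set L'" "map pl' L' = tl (map pl L)" "pl' x = pl (hd L)"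
    "\<forall>v. v \<notin> set L \<longrightarrow> pl' v = pl v"
proof -
  consider x where "L = [x]" | a b where "L = [a, b]" | "3 \<le> length L"
  proof (cases L rule: remdups_adj.cases)
    case (3 a b xs)
    then show ?thesis using that by (cases xs) auto
  qed (use assms(2) in auto)
  then show ?thesis
  proof cases
    case (1 x)
    then show ?thesis
      by (intro that[where g = "[]" and pl' = pl and x = x and L' = "[]"])
        (simp_all add: cascade_def cascade_cost_def)
  next
    case (2 a b)
    then show ?thesis using assms(1)
      by (intro that[where g = "[CR b a (int (pl b) - int r)]" and pl' = pl and x = a and L' = "[b]"])
        (simp_all add: cascade_def cascade_cost_def Let_def)
  next
    case 3
    obtain g pl' where loop: "cascade_loop r False {} pl L = (g, pl')" by fastforce
    then have g: "cnot_cost g = 3 * (length L - 1)" and rot: "map pl' L = rotate1 (map pl L)"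
      and "\<forall>v. v \<notin> set L \<longrightarrow> pl' v = pl v"
      using cascade_loop_distinct[OF assms(1), of "{}" r pl] by auto
    moreover have "cascade r L pl = (Had (hd L) # g, pl')" using loop 3 by (simp add: cascade_def)
    moreover have "map pl' (butlast L) = tl (map pl L)"
      unfolding map_butlast rot by (cases "map pl L") simp_all
    moreover have "pl' (last L) = pl (hd L)"
    proof -
      have "pl' (last L) = last (rotate1 (map pl L))"
        unfolding rot[symmetric] using assms(2) by (rule last_map[symmetric])
      then show ?thesis using assms(2) by (cases L) simp_all
    qed
    moreover have split: "butlast L @ [last L] = L" using assms(2) by (rule append_butlast_last_id)
    then have "set L = insert (last L) (set (butlast L))"
      by (metis Un_insert_right empty_set list.simps(15) set_append sup_bot.right_neutral)
    moreover have "last L \<notin> set (butlast L)"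
      using assms(1) split by (metis distinct_append disjoint_iff list.set_intros(1))
    ultimately show ?thesis using 3
      by (intro that[where g = g and pl' = pl' and x = "last L" and L' = "butlast L"])
        (auto simp: cascade_cost_def)
  qed
qed

lemma init_pl_distinct: "distinct P \<Longrightarrow> map (init_pl P) P = [1..<Suc (length P)]"
proof (rule nth_equalityI)
  fix i assume "distinct P" "i < length (map (init_pl P) P)"
  then have "(LEAST j. j < length P \<and> P ! j = P ! i) = i"
    by (intro Least_equality) (auto simp: nth_eq_iff_index_eq)
  then show "map (init_pl P) P ! i = [1..<Suc (length P)] ! i"
    using \<open>distinct P\<close> \<open>i < _\<close> by (simp add: init_pl_def distinct_remdups_id del: upt_Suc)
qed (simp del: upt_Suc)

lemma holder_eq_hd:
  assumes "distinct L" "L \<noteq> []" "set L \<subseteq> V" "map pl L = [r..<b]" "\<forall>v\<in>V - set L. pl v < r"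
  shows "holder V pl r = hd L"
  unfolding holder_def
proof (rule the_equality)
  have "pl (hd L) = hd [r..<b]" using assms(2,4) by (metis hd_map)
  moreover have "r < b" using assms(2,4) by (metis Nil_is_map_conv upt_eq_Nil_conv not_le)
  ultimately show hd: "hd L \<in> V \<and> pl (hd L) = r" using assms(2,3) by auto
  fix v assume v: "v \<in> V \<and> pl v = r"
  then have "v \<in> set L" using assms(5) by force
  moreover have "inj_on pl (set L)" using assms(1,4) by (metis distinct_map distinct_upt)
  ultimately show "v = hd L" using v hd assms(2) by (metis inj_onD list.set_sel(1))
qed

definition qft_invariant :: "nat \<Rightarrow> nat \<Rightarrow> placement \<Rightarrow> nat list \<Rightarrow> bool" where
  "qft_invariant n m pl L \<longleftrightarrow> successively path_adj L \<and> distinct L \<and> set L \<subseteq> {1..n} \<and>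
     map pl L = [Suc m..<Suc n] \<and> (\<forall>v\<in>{1..n} - set L. pl v \<le> m)"

lemma qft_invariant_length: "qft_invariant n m pl L \<Longrightarrow> length L = n - m"
  unfolding qft_invariant_def by (metis diff_Suc_Suc length_map length_upt)

lemma holder_qft_invariant:
  "qft_invariant n m pl L \<Longrightarrow> L \<noteq> [] \<Longrightarrow> holder {1..n} pl (Suc m) = hd L"
  unfolding qft_invariant_def
  by (intro holder_eq_hd[where b = "Suc n"]) (auto simp: less_Suc_eq_le simp del: upt_Suc)

lemma next_walk_eq:
  assumes "valid_choices path_adj {1..n} n P W" "0 < m"
    and "qft_state {1..n} P W m = (g, pl, set L)" "qft_invariant n m pl L" "L \<noteq> []"
  shows "W (Suc m) = L"
proof -
  have "m < n"
    using qft_invariant_length[OF assms(4)] assms(5) by (metis length_greater_0_conv zero_less_diff)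
  then have "shortest_cover_walk_from path_adj (set L) (holder {1..n} pl (Suc m)) (W (Suc m))"
    using assms(1-3) unfolding valid_choices_def by (auto dest!: spec[of _ "Suc m"])
  then show ?thesis
    using shortest_cover_walk_from_path_adj holder_qft_invariant assms(4,5)
    unfolding qft_invariant_def by metis
qed

lemma qft_invariant_cascade:
  assumes inv: "qft_invariant n m pl L" and "L \<noteq> []" and "cascade (Suc m) L pl = (gs, pl')"
  obtains g L' where "gs = Had (hd L) # g" "cnot_cost g = cascade_cost (length L)"
    "set L' = set L - {holder {1..n} pl' (Suc m)}" "qft_invariant n (Suc m) pl' L'"
proof -
  have L: "successively path_adj L" "distinct L" "set L \<subseteq> {1..n}" "map pl L = [Suc m..<Suc n]"
    "\<forall>v\<in>{1..n} - set L. pl v \<le> m"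
    using inv unfolding qft_invariant_def by auto
  obtain g pl'' x L' where casc: "cascade (Suc m) L pl = (Had (hd L) # g, pl'')"
    and cost: "cnot_cost g = cascade_cost (length L)" and L': "L' = butlast L \<or> L' = tl L"
    and split: "set L = insert x (set L')" "x \<notin> set L'"
    and moved: "map pl'' L' = tl (map pl L)" "pl'' x = pl (hd L)"
    and fixed: "\<forall>v. v \<notin> set L \<longrightarrow> pl'' v = pl v"
    by (rule cascade_distinct[OF L(2) assms(2)])
  have gs: "gs = Had (hd L) # g" "pl' = pl''" using casc assms(3) by auto
  have "m < n"
    using qft_invariant_length[OF inv] assms(2) by (metis length_greater_0_conv zero_less_diff)
  have map_x: "map pl' (x # L') = [Suc m..<Suc n]"
    using moved gs(2) assms(2) L(4) by (cases L) auto
  then have x: "pl' x = Suc m" using \<open>m < n\<close> by (simp add: upt_conv_Cons del: upt_Suc)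
  have L'_walk: "successively path_adj L'" "distinct L'"
    using L' L(1,2) successively_butlast successively_tl distinct_butlast distinct_tl by metis+
  have outside: "\<forall>v\<in>{1..n} - set L. pl' v \<le> m" using fixed L(5) gs(2) by simp
  have "holder {1..n} pl' (Suc m) = x"
    using holder_eq_hd[OF _ _ _ map_x] L(3) L'_walk(2) split outside
    by (simp add: less_Suc_eq_le)
  moreover have "qft_invariant n (Suc m) pl' L'"
    unfolding qft_invariant_def
  proof (intro conjI)
    show "set L' \<subseteq> {1..n}" using L(3) split by simp
    show "map pl' L' = [Suc (Suc m)..<Suc n]"
      using map_x \<open>m < n\<close> by (simp add: upt_conv_Cons del: upt_Suc)
    show "\<forall>v\<in>{1..n} - set L'. pl' v \<le> Suc m"
    proof
      fix v assume v: "v \<in> {1..n} - set L'"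
      show "pl' v \<le> Suc m"
      proof (cases "v = x")
        case False
        then have "v \<in> {1..n} - set L" using v split by simp
        then show ?thesis using outside le_SucI by blast
      qed (simp add: x)
    qed
  qed (fact L'_walk)+
  ultimately show ?thesis using split by (intro that[OF gs(1) cost]) auto
qed

lemma qft_invariant_init:
  assumes "valid_choices path_adj {1..n} n P W"
  shows "qft_invariant n 0 (init_pl P) P" "set P = {1..n}" "W 1 = P"
proof -
  have P: "shortest_cover_walk path_adj {1..n} P" and "W 1 = P"
    using assms unfolding valid_choices_def by auto
  then show "W 1 = P" "set P = {1..n}" using shortest_cover_walk_path_adj by auto
  show "qft_invariant n 0 (init_pl P) P"
    using shortest_cover_walk_path_adj[OF P] init_pl_distinct unfolding qft_invariant_def by auto
qed

lemma qft_state_invariant: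
  assumes choices: "valid_choices path_adj {1..n} n P W"
  shows "m \<le> n \<Longrightarrow> qft_state {1..n} P W m = (g, pl, R) \<Longrightarrow>
    cnot_cost g = (\<Sum>k = Suc (n - m)..n. cascade_cost k) \<and>
    (m < n \<longrightarrow> qft_invariant n m pl (W (Suc m)) \<and> R = set (W (Suc m)))"
proof (induction m arbitrary: g pl R)
  case 0
  then show ?case using qft_invariant_init[OF choices] by auto
next
  case (Suc m)
  obtain g0 pl0 R0 where state: "qft_state {1..n} P W m = (g0, pl0, R0)" by (metis prod_cases3)
  define L where "L = W (Suc m)"
  have IH: "cnot_cost g0 = (\<Sum>k = Suc (n - m)..n. cascade_cost k)" "qft_invariant n m pl0 L" "R0 = set L"
    using Suc.IH[OF _ state] Suc.prems(1) unfolding L_def by auto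
  have len: "length L = n - m" using qft_invariant_length[OF IH(2)] .
  then have "L \<noteq> []" using Suc.prems(1) by auto
  obtain gs pl' where casc: "cascade (Suc m) L pl0 = (gs, pl')" by fastforce
  obtain g1 L' where gs: "gs = Had (hd L) # g1" and cost: "cnot_cost g1 = cascade_cost (length L)"
    and R': "set L' = set L - {holder {1..n} pl' (Suc m)}" and inv: "qft_invariant n (Suc m) pl' L'"
    by (rule qft_invariant_cascade[OF IH(2) \<open>L \<noteq> []\<close> casc])
  have state': "qft_state {1..n} P W (Suc m) = (g0 @ gs, pl', set L')"
    using state casc IH(3) R' unfolding L_def by simp
  have "(g, pl, R) = (g0 @ gs, pl', set L')" using Suc.prems(2) state' by metis
  then have new: "g = g0 @ Had (hd L) # g1" "pl = pl'" "R = set L'" using gs by simp_all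
  have "cnot_cost g = cnot_cost g0 + cascade_cost (n - m)"
    using new(1) cost len by (simp add: cnot_cost_append_Had)
  also have "\<dots> = (\<Sum>k = Suc (n - Suc m)..n. cascade_cost k)"
    using IH(1) Suc.prems(1) by (simp add: sum.atLeast_Suc_atMost Suc_diff_Suc)
  finally have "cnot_cost g = (\<Sum>k = Suc (n - Suc m)..n. cascade_cost k)" .
  moreover have "W (Suc (Suc m)) = L'" if "Suc m < n"
    using next_walk_eq[OF choices _ state' inv] qft_invariant_length[OF inv] that by force
  ultimately show ?case using new inv by auto
qed

lemma sum_cascade_cost:
  "2 \<le> n \<Longrightarrow> real (\<Sum>k = 1..n. cascade_cost k) = 1.5 * real n ^ 2 - 1.5 * real n - 1"
proof (induction n rule: dec_induct)
  case base
  then show ?case by (simp add: cascade_cost_def numeral_2_eq_2)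
next
  case (step n)
  then have "(\<Sum>k = 1..Suc n. cascade_cost k) = (\<Sum>k = 1..n. cascade_cost k) + 3 * n"
    by (simp add: sum.cl_ivl_Suc cascade_cost_def)
  moreover have "real (Suc n) ^ 2 = real n ^ 2 + 2 * real n + 1"
    by (simp add: power2_eq_square algebra_simps)
  ultimately show ?case using step.IH by (simp add: field_simps)
qed

theorem lemma6:
  fixes n :: nat and P :: "nat list" and W :: "nat \<Rightarrow> nat list"
  assumes "n \<ge> 2"
    and "valid_choices path_adj {1..n} n P W"
  shows "real (cnot_cost (qft_circuit {1..n} n P W)) = 1.5 * real n ^ 2 - 1.5 * real n - 1"
proof -
  obtain g pl R where state: "qft_state {1..n} P W n = (g, pl, R)" by (metis prod_cases3)
  have "cnot_cost (qft_circuit {1..n} n P W) = (\<Sum>k = 1..n. cascade_cost k)"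
    using qft_state_invariant[OF assms(2) order_refl state] state by (simp add: qft_circuit_def)
  then show ?thesis using sum_cascade_cost[OF assms(1)] by simp
qed

end
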